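(* For all integers $r, k \geq 2$, $$ P_r(k) \geq P_{r-1}(k) + f_{k,k+1}\big(P_r(k)\big). $$
   Context: A colour pattern on a vertex set $V$ is a sequence $G_1,\dots,G_r$ ($r\ge1$) of pairwise edge-disjoint graphs all having vertex set $V$; it is $K_{k+1}$-free if no $G_i$ contains $K_{k+1}$. Given a colour pattern $G_1,\dots,G_r$ on $V$ and a colouring $c: V \to [r]$, a strongly monochromatic $K_k$ is a set of $k$ vertices all receiving the same colour $i$ under $c$ and forming a clique in $G_i$. $P_r(k)$ is the smallest integer $n$ such that there exists a $K_{k+1}$-free colour pattern $G_1,\dots,G_r$ on an $n$-element vertex set $V$ such that every colouring $V \to [r]$ yields a strongly monochromatic $K_k$. For a graph $F$, the $k$-independence number $\alpha_k(F)$ is the largest size of a vertex subset of $F$ containing no $K_k$. The Erdős–Rogers function $f_{k,k+1}(n)$ is the minimum of $\alpha_k(F)$ over all $K_{k+1}$-free graphs $F$ on $n$ vertices. *)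

theory Defs
  imports Main
begin

definition graph_on :: "'a set \<Rightarrow> 'a set set \<Rightarrow> bool" where
  "graph_on V E \<longleftrightarrow> E \<subseteq> {e. e \<subseteq> V \<and> card e = 2}"

definition is_clique :: "'a set set \<Rightarrow> 'a set \<Rightarrow> bool" where
  "is_clique E S \<longleftrightarrow> (\<forall>x\<in>S. \<forall>y\<in>S. x \<noteq> y \<longrightarrow> {x, y} \<in> E)"

definition K_free :: "'a set \<Rightarrow> 'a set set \<Rightarrow> nat \<Rightarrow> bool" where
  "K_free V E m \<longleftrightarrow> \<not> (\<exists>S. S \<subseteq> V \<and> card S = m \<and> is_clique E S)"

definition colour_pattern :: "'a set \<Rightarrow> nat \<Rightarrow> (nat \<Rightarrow> 'a set set) \<Rightarrow> bool" where
  "colour_pattern V r G \<longleftrightarrow> r \<ge> 1 \<and> (\<forall>i\<in>{1..r}. graph_on V (G i)) \<and>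
     (\<forall>i\<in>{1..r}. \<forall>j\<in>{1..r}. i \<noteq> j \<longrightarrow> G i \<inter> G j = {})"

definition strongly_mono_clique ::
  "'a set \<Rightarrow> (nat \<Rightarrow> 'a set set) \<Rightarrow> ('a \<Rightarrow> nat) \<Rightarrow> nat \<Rightarrow> 'a set \<Rightarrow> bool" where
  "strongly_mono_clique V G c k S \<longleftrightarrow>
     S \<subseteq> V \<and> card S = k \<and> (\<exists>i. (\<forall>v\<in>S. c v = i) \<and> is_clique (G i) S)"

definition P :: "nat \<Rightarrow> nat \<Rightarrow> nat" where
  "P r k = (LEAST n. \<exists>G. colour_pattern {0..<n} r G \<and>
      (\<forall>i\<in>{1..r}. K_free {0..<n} (G i) (k + 1)) \<and>
      (\<forall>c. (\<forall>v\<in>{0..<n}. c v \<in> {1..r}) \<longrightarrow>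
           (\<exists>S. strongly_mono_clique {0..<n} G c k S)))"

definition alpha_k :: "'a set \<Rightarrow> 'a set set \<Rightarrow> nat \<Rightarrow> nat" where
  "alpha_k V E k = Max {card S | S. S \<subseteq> V \<and> K_free S E k}"

definition erdos_rogers :: "nat \<Rightarrow> nat \<Rightarrow> nat" where
  "erdos_rogers k n = Min {alpha_k {0..<n} F k | F.
      graph_on {0..<n} F \<and> K_free {0..<n} F (k + 1)}"

end

theory Submission
  imports Defs
begin

text \<open>Take a pattern on \<open>n = P\<^sub>r(k)\<close> vertices witnessing the definition and a largest
\<open>K\<^sub>k\<close>-free vertex set \<open>S\<close> of its last graph \<open>G\<^sub>r\<close>; since \<open>G\<^sub>r\<close> is \<open>K\<^sub>k\<^sub>+\<^sub>1\<close>-free,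
\<open>|S| \<ge> f\<^sub>k\<^sub>,\<^sub>k\<^sub>+\<^sub>1(n)\<close>. Any colouring of the remaining vertices with colours \<open>1..r-1\<close>,
extended by colour \<open>r\<close> on \<open>S\<close>, has a strongly monochromatic \<open>K\<^sub>k\<close>, which cannot lie in \<open>S\<close>;
so the first \<open>r - 1\<close> graphs on \<open>V - S\<close> again form such a pattern and \<open>n - |S| \<ge> P\<^sub>r\<^sub>-\<^sub>1(k)\<close>.
That \<open>P\<^sub>r(k)\<close> is attained at all (it is defined by \<open>LEAST\<close>) needs a construction: \<open>k\<close> copies
of a pattern for \<open>r - 1\<close> colours, joined by the complete \<open>k\<close>-partite graph in colour \<open>r\<close>:
a colouring either avoids colour \<open>r\<close> on some copy, which then contains the required clique,
or has a vertex of colour \<open>r\<close> in every copy, and these \<open>k\<close> vertices form a clique.\<close>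

definition forcing_pattern :: "'a set \<Rightarrow> nat \<Rightarrow> (nat \<Rightarrow> 'a set set) \<Rightarrow> nat \<Rightarrow> bool" where
  "forcing_pattern V r G k \<longleftrightarrow> colour_pattern V r G \<and>
      (\<forall>i\<in>{1..r}. K_free V (G i) (k + 1)) \<and>
      (\<forall>c. (\<forall>v\<in>V. c v \<in> {1..r}) \<longrightarrow> (\<exists>S. strongly_mono_clique V G c k S))"

lemma P_eq_Least: "P r k = (LEAST n. \<exists>G. forcing_pattern {0..<n} r G k)"
  by (simp add: P_def forcing_pattern_def)

subsection \<open>Transport along injections\<close>

lemma is_clique_image:
  assumes "is_clique E S"
  shows "is_clique ((`) f ` E) (f ` S)"
  unfolding is_clique_def
proof (intro ballI impI)
  fix x' y' assume "x' \<in> f ` S" "y' \<in> f ` S" "x' \<noteq> y'"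
  then obtain x y where "x \<in> S" "y \<in> S" "x \<noteq> y" "x' = f x" "y' = f y" by blast
  then have "{x, y} \<in> E" and "{x', y'} = f ` {x, y}" using assms by (auto simp: is_clique_def)
  then show "{x', y'} \<in> (`) f ` E" by blast
qed

lemma image_doubleton_mem_iff:
  assumes f: "inj_on f V" and E: "graph_on V E" and xy: "{x, y} \<subseteq> V"
  shows "{f x, f y} \<in> (`) f ` E \<longleftrightarrow> {x, y} \<in> E"
proof
  assume "{f x, f y} \<in> (`) f ` E"
  then have "f ` {x, y} \<in> (`) f ` E" by simp
  then obtain e where e: "f ` {x, y} = f ` e" "e \<in> E" by (rule imageE)
  have "e \<subseteq> V" using e(2) E by (auto simp: graph_on_def)
  with e(1) have "{x, y} = e" using inj_on_image_eq_iff[OF f xy] by blast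
  then show "{x, y} \<in> E" using e(2) by simp
next
  assume "{x, y} \<in> E"
  then have "f ` {x, y} \<in> (`) f ` E" by (rule imageI)
  then show "{f x, f y} \<in> (`) f ` E" by simp
qed

lemma is_clique_image_iff:
  assumes f: "inj_on f V" and E: "graph_on V E" and S: "S \<subseteq> V"
  shows "is_clique ((`) f ` E) (f ` S) \<longleftrightarrow> is_clique E S"
proof
  assume clique: "is_clique ((`) f ` E) (f ` S)"
  show "is_clique E S"
    unfolding is_clique_def
  proof (intro ballI impI)
    fix x y assume xy: "x \<in> S" "y \<in> S" "x \<noteq> y"
    then have "f x \<noteq> f y" using S inj_on_eq_iff[OF f] by blast
    then have "{f x, f y} \<in> (`) f ` E" using clique xy unfolding is_clique_def by blast
    moreover have "{x, y} \<subseteq> V" using xy S by blast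
    ultimately show "{x, y} \<in> E" using image_doubleton_mem_iff[OF f E] by blast
  qed
qed (rule is_clique_image)

lemma graph_on_image:
  assumes f: "inj_on f V" and E: "graph_on V E"
  shows "graph_on (f ` V) ((`) f ` E)"
  unfolding graph_on_def
proof
  fix e' assume "e' \<in> (`) f ` E"
  then obtain e where "e \<in> E" "e' = f ` e" by blast
  moreover have "e \<subseteq> V" "card e = 2" using \<open>e \<in> E\<close> E by (auto simp: graph_on_def)
  ultimately show "e' \<in> {e. e \<subseteq> f ` V \<and> card e = 2}"
    using card_image[OF inj_on_subset[OF f]] by auto
qed

lemma colour_pattern_image:
  assumes f: "inj_on f V" and G: "colour_pattern V r G"
  shows "colour_pattern (f ` V) r (\<lambda>i. (`) f ` G i)"
  unfolding colour_pattern_def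
proof (intro conjI ballI impI)
  show "r \<ge> 1" using G by (simp add: colour_pattern_def)
next
  fix i assume "i \<in> {1..r}"
  then show "graph_on (f ` V) ((`) f ` G i)"
    using graph_on_image[OF f] G by (simp add: colour_pattern_def)
next
  fix i j assume ij: "i \<in> {1..r}" "j \<in> {1..r}" "i \<noteq> j"
  have edges: "G l \<subseteq> Pow V" if "l \<in> {1..r}" for l
    using G that unfolding colour_pattern_def graph_on_def by blast
  have "(`) f ` G i \<inter> (`) f ` G j = (`) f ` (G i \<inter> G j)"
    using inj_on_image_Int[OF inj_on_image_Pow[OF f] edges[OF ij(1)] edges[OF ij(2)]] by simp
  also have "G i \<inter> G j = {}" using G ij by (simp add: colour_pattern_def)
  finally show "(`) f ` G i \<inter> (`) f ` G j = {}" by simp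
qed

lemma K_free_image:
  assumes "inj_on f V" "graph_on V E" "K_free V E m"
  shows "K_free (f ` V) ((`) f ` E) m"
  unfolding K_free_def
proof
  assume "\<exists>S'. S' \<subseteq> f ` V \<and> card S' = m \<and> is_clique ((`) f ` E) S'"
  then obtain S' where S': "S' \<subseteq> f ` V" "card S' = m" "is_clique ((`) f ` E) S'" by blast
  define S where "S = V \<inter> f -` S'"
  have S: "S \<subseteq> V" "f ` S = S'" using S'(1) unfolding S_def by auto
  have "card S = m" using card_image[OF inj_on_subset[OF assms(1) S(1)]] S(2) S'(2) by simp
  moreover have "is_clique E S" using is_clique_image_iff[OF assms(1,2) S(1)] S(2) S'(3) by simp
  ultimately show False using assms(3) S(1) unfolding K_free_def by blast
qed

lemma forcing_pattern_image:
  assumes f: "inj_on f V" and G: "forcing_pattern V r G k"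
  shows "forcing_pattern (f ` V) r (\<lambda>i. (`) f ` G i) k"
  unfolding forcing_pattern_def
proof (intro conjI ballI allI impI)
  show "colour_pattern (f ` V) r (\<lambda>i. (`) f ` G i)"
    using colour_pattern_image[OF f] G by (simp add: forcing_pattern_def)
next
  fix i assume "i \<in> {1..r}"
  then show "K_free (f ` V) ((`) f ` G i) (k + 1)"
    using K_free_image[OF f] G by (simp add: forcing_pattern_def colour_pattern_def)
next
  fix c assume "\<forall>v\<in>f ` V. c v \<in> {1..r}"
  then have "\<forall>v\<in>V. (c \<circ> f) v \<in> {1..r}" by simp
  then obtain S where "strongly_mono_clique V G (c \<circ> f) k S"
    using G unfolding forcing_pattern_def by blast
  then obtain i where S: "S \<subseteq> V" "card S = k" "\<forall>v\<in>S. c (f v) = i" "is_clique (G i) S"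
    unfolding strongly_mono_clique_def by auto
  have "card (f ` S) = k" using card_image[OF inj_on_subset[OF f S(1)]] S(2) by simp
  with S have "strongly_mono_clique (f ` V) (\<lambda>i. (`) f ` G i) c k (f ` S)"
    unfolding strongly_mono_clique_def by (blast intro: is_clique_image)
  then show "\<exists>S. strongly_mono_clique (f ` V) (\<lambda>i. (`) f ` G i) c k S" ..
qed

lemma forcing_pattern_relabel:
  assumes "finite V" "forcing_pattern V r G k"
  obtains G' where "forcing_pattern {0..<card V} r G' k"
proof -
  obtain h where "bij_betw h V {0..<card V}"
    using finite_same_card_bij[OF assms(1), of "{0..<card V}"] by auto
  then have "forcing_pattern {0..<card V} r (\<lambda>i. (`) h ` G i) k"
    using forcing_pattern_image[OF _ assms(2)] by (metis bij_betw_def)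
  then show ?thesis by (rule that)
qed

lemma P_le_card:
  assumes "finite V" "forcing_pattern V r G k"
  shows "P r k \<le> card V"
proof -
  obtain G' where "forcing_pattern {0..<card V} r G' k"
    using forcing_pattern_relabel[OF assms] .
  then show ?thesis unfolding P_eq_Least by (blast intro: Least_le)
qed

subsection \<open>Existence of forcing patterns\<close>

lemma forcing_pattern_complete_graph:
  "forcing_pattern {0..<k} 1 (\<lambda>_. {e. e \<subseteq> {0..<k} \<and> card e = 2}) k"
  unfolding forcing_pattern_def
proof (intro conjI ballI allI impI)
  show "colour_pattern {0..<k} 1 (\<lambda>_. {e. e \<subseteq> {0..<k} \<and> card e = 2})"
    by (simp add: colour_pattern_def graph_on_def)
next
  show "K_free {0..<k} {e. e \<subseteq> {0..<k} \<and> card e = 2} (k + 1)"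
    unfolding K_free_def
  proof
    assume "\<exists>S. S \<subseteq> {0..<k} \<and> card S = k + 1 \<and> is_clique {e. e \<subseteq> {0..<k} \<and> card e = 2} S"
    then obtain S where "S \<subseteq> {0..<k}" "card S = k + 1" by blast
    then show False using card_mono[OF finite_atLeastLessThan, of S 0 k] by simp
  qed
next
  fix c :: "nat \<Rightarrow> nat" assume c: "\<forall>v\<in>{0..<k}. c v \<in> {1..1}"
  have "strongly_mono_clique {0..<k} (\<lambda>_. {e. e \<subseteq> {0..<k} \<and> card e = 2}) c k {0..<k}"
    unfolding strongly_mono_clique_def
  proof (intro conjI exI[of _ 1])
    show "\<forall>v\<in>{0..<k}. c v = 1" using c by simp
    show "is_clique {e. e \<subseteq> {0..<k} \<and> card e = 2} {0..<k}" by (simp add: is_clique_def)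
  qed simp_all
  then show "\<exists>S. strongly_mono_clique {0..<k} (\<lambda>_. {e. e \<subseteq> {0..<k} \<and> card e = 2}) c k S" ..
qed

definition blowup_pattern ::
  "nat \<Rightarrow> 'a set \<Rightarrow> nat \<Rightarrow> (nat \<Rightarrow> 'a set set) \<Rightarrow> nat \<Rightarrow> (nat \<times> 'a) set set" where
  "blowup_pattern k U r H i = (if i = Suc r then
      {e. e \<subseteq> {0..<k} \<times> U \<and> card e = 2 \<and> (\<forall>x\<in>e. \<forall>y\<in>e. x \<noteq> y \<longrightarrow> fst x \<noteq> fst y)}
    else {e. e \<subseteq> {0..<k} \<times> U \<and> card e = 2 \<and> (\<forall>x\<in>e. \<forall>y\<in>e. fst x = fst y) \<and> snd ` e \<in> H i})"

lemma blowup_pattern_last_mem_iff: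
  "x \<noteq> y \<Longrightarrow> {x, y} \<in> blowup_pattern k U r H (Suc r) \<longleftrightarrow>
     x \<in> {0..<k} \<times> U \<and> y \<in> {0..<k} \<times> U \<and> fst x \<noteq> fst y"
  by (auto simp: blowup_pattern_def)

lemma blowup_pattern_mem_iff:
  "x \<noteq> y \<Longrightarrow> i \<noteq> Suc r \<Longrightarrow> {x, y} \<in> blowup_pattern k U r H i \<longleftrightarrow>
     x \<in> {0..<k} \<times> U \<and> y \<in> {0..<k} \<times> U \<and> fst x = fst y \<and> {snd x, snd y} \<in> H i"
  by (auto simp: blowup_pattern_def)

lemma colour_pattern_blowup:
  assumes H: "colour_pattern U r H"
  shows "colour_pattern ({0..<k} \<times> U) (Suc r) (blowup_pattern k U r H)"
  unfolding colour_pattern_def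
proof (intro conjI ballI impI)
  fix i assume "i \<in> {1..Suc r}"
  show "graph_on ({0..<k} \<times> U) (blowup_pattern k U r H i)"
    by (auto simp: graph_on_def blowup_pattern_def)
next
  fix i j assume i: "i \<in> {1..Suc r}" and j: "j \<in> {1..Suc r}" and "i \<noteq> j"
  show "blowup_pattern k U r H i \<inter> blowup_pattern k U r H j = {}"
  proof (rule ccontr)
    assume "blowup_pattern k U r H i \<inter> blowup_pattern k U r H j \<noteq> {}"
    then obtain e where e: "e \<in> blowup_pattern k U r H i" "e \<in> blowup_pattern k U r H j" by blast
    then have "card e = 2" by (auto simp: blowup_pattern_def split: if_splits)
    then obtain x y where xy: "x \<noteq> y" "e = {x, y}" by (meson card_2_iff)
    have exy: "{x, y} \<in> blowup_pattern k U r H i" "{x, y} \<in> blowup_pattern k U r H j"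
      using e xy(2) by simp_all
    have fst_neq: "fst x \<noteq> fst y" if "{x, y} \<in> blowup_pattern k U r H (Suc r)"
      using that blowup_pattern_last_mem_iff[OF xy(1)] by blast
    have fst_eq: "fst x = fst y \<and> {snd x, snd y} \<in> H l"
      if "l \<noteq> Suc r" "{x, y} \<in> blowup_pattern k U r H l" for l
      using that blowup_pattern_mem_iff[OF xy(1) that(1)] by blast
    show False
    proof (cases "i = Suc r \<or> j = Suc r")
      case True
      then consider "i = Suc r" "j \<noteq> Suc r" | "j = Suc r" "i \<noteq> Suc r" using \<open>i \<noteq> j\<close> by blast
      then show False
        by cases (use exy fst_neq fst_eq in auto)
    next
      case False
      then have "{snd x, snd y} \<in> H i \<inter> H j" using exy fst_eq by blast
      moreover have "i \<in> {1..r}" "j \<in> {1..r}" using i j False by auto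
      ultimately show False using H \<open>i \<noteq> j\<close> unfolding colour_pattern_def by blast
    qed
  qed
qed simp

lemma K_free_blowup_last: "K_free ({0..<k} \<times> U) (blowup_pattern k U r H (Suc r)) (k + 1)"
  unfolding K_free_def
proof
  assume "\<exists>S. S \<subseteq> {0..<k} \<times> U \<and> card S = k + 1 \<and> is_clique (blowup_pattern k U r H (Suc r)) S"
  then obtain S where S: "S \<subseteq> {0..<k} \<times> U" "card S = k + 1"
    and clique: "is_clique (blowup_pattern k U r H (Suc r)) S" by blast
  have "inj_on fst S"
  proof (rule inj_onI, rule ccontr)
    fix x y assume "x \<in> S" "y \<in> S" "fst x = fst y" "x \<noteq> y"
    then show False
      using clique blowup_pattern_last_mem_iff[OF \<open>x \<noteq> y\<close>] unfolding is_clique_def by blast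
  qed
  then have "card S = card (fst ` S)" by (simp add: card_image)
  also have "\<dots> \<le> card {0..<k}" using S(1) by (intro card_mono) auto
  finally show False using S(2) by simp
qed

lemma K_free_blowup:
  assumes "i \<noteq> Suc r" and H: "K_free U (H i) (k + 1)"
  shows "K_free ({0..<k} \<times> U) (blowup_pattern k U r H i) (k + 1)"
  unfolding K_free_def
proof
  assume "\<exists>S. S \<subseteq> {0..<k} \<times> U \<and> card S = k + 1 \<and> is_clique (blowup_pattern k U r H i) S"
  then obtain S where S: "S \<subseteq> {0..<k} \<times> U" "card S = k + 1"
    and clique: "is_clique (blowup_pattern k U r H i) S" by blast
  note mem = blowup_pattern_mem_iff[OF _ \<open>i \<noteq> Suc r\<close>]
  have "S \<noteq> {}" using S(2) by auto
  then obtain s0 where s0: "s0 \<in> S" by blast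
  have "fst x = fst s0" if "x \<in> S" for x
    using clique mem that s0 unfolding is_clique_def by metis
  then have "inj_on snd S" unfolding inj_on_def by (metis prod.expand)
  then have "card (snd ` S) = k + 1" using S(2) by (simp add: card_image)
  moreover have "snd ` S \<subseteq> U" using S(1) by auto
  moreover have "is_clique (H i) (snd ` S)"
    unfolding is_clique_def
  proof (intro ballI impI)
    fix u v assume "u \<in> snd ` S" "v \<in> snd ` S" "u \<noteq> v"
    then obtain x y where "x \<in> S" "y \<in> S" "u = snd x" "v = snd y" "x \<noteq> y" by blast
    then show "{u, v} \<in> H i" using clique mem unfolding is_clique_def by metis
  qed
  ultimately show False using H unfolding K_free_def by blast
qed

lemma blowup_pattern_forces_mono_clique:
  assumes H: "forcing_pattern U r H k" and "k \<ge> 1"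
    and c: "\<forall>v\<in>{0..<k} \<times> U. c v \<in> {1..Suc r}"
  shows "\<exists>S. strongly_mono_clique ({0..<k} \<times> U) (blowup_pattern k U r H) c k S"
proof (cases "\<exists>j<k. \<forall>u\<in>U. c (j, u) \<noteq> Suc r")
  case True
  then obtain j where j: "j < k" "\<forall>u\<in>U. c (j, u) \<noteq> Suc r" by blast
  then have "\<forall>u\<in>U. c (j, u) \<in> {1..r}" using c by fastforce
  moreover have "\<exists>T. strongly_mono_clique U H c' k T" if "\<forall>u\<in>U. c' u \<in> {1..r}" for c'
    using H that unfolding forcing_pattern_def by blast
  ultimately obtain T where "strongly_mono_clique U H (\<lambda>u. c (j, u)) k T" by metis
  then obtain i where T: "T \<subseteq> U" "card T = k" "\<forall>u\<in>T. c (j, u) = i" and clique: "is_clique (H i) T"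
    unfolding strongly_mono_clique_def by auto
  have "T \<noteq> {}" using T(2) \<open>k \<ge> 1\<close> by auto
  then have i: "i \<noteq> Suc r" using T j by blast
  have "strongly_mono_clique ({0..<k} \<times> U) (blowup_pattern k U r H) c k (Pair j ` T)"
    unfolding strongly_mono_clique_def
  proof (intro conjI exI)
    show "Pair j ` T \<subseteq> {0..<k} \<times> U" using T(1) j(1) by auto
    show "card (Pair j ` T) = k" using T(2) by (simp add: card_image inj_on_def)
    show "\<forall>v\<in>Pair j ` T. c v = i" using T(3) by auto
    show "is_clique (blowup_pattern k U r H i) (Pair j ` T)"
      unfolding is_clique_def
    proof (intro ballI impI)
      fix x y assume "x \<in> Pair j ` T" "y \<in> Pair j ` T" "x \<noteq> y"
      then show "{x, y} \<in> blowup_pattern k U r H i"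
        using clique T(1) j(1) blowup_pattern_mem_iff[OF \<open>x \<noteq> y\<close> i] unfolding is_clique_def by auto
    qed
  qed
  then show ?thesis ..
next
  case False
  then obtain g where g: "\<forall>j<k. g j \<in> U \<and> c (j, g j) = Suc r" by metis
  define S where "S = (\<lambda>j. (j, g j)) ` {0..<k}"
  have "strongly_mono_clique ({0..<k} \<times> U) (blowup_pattern k U r H) c k S"
    unfolding strongly_mono_clique_def
  proof (intro conjI exI)
    show "S \<subseteq> {0..<k} \<times> U" using g by (auto simp: S_def)
    show "card S = k" unfolding S_def by (simp add: card_image inj_on_def)
    show "\<forall>v\<in>S. c v = Suc r" using g by (auto simp: S_def)
    show "is_clique (blowup_pattern k U r H (Suc r)) S"
      unfolding is_clique_def
    proof (intro ballI impI)
      fix x y assume "x \<in> S" "y \<in> S" "x \<noteq> y"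
      then show "{x, y} \<in> blowup_pattern k U r H (Suc r)"
        using g blowup_pattern_last_mem_iff[OF \<open>x \<noteq> y\<close>] unfolding S_def by auto
    qed
  qed
  then show ?thesis ..
qed

lemma forcing_pattern_blowup:
  assumes H: "forcing_pattern U r H k" and "k \<ge> 1"
  shows "forcing_pattern ({0..<k} \<times> U) (Suc r) (blowup_pattern k U r H) k"
  unfolding forcing_pattern_def
proof (intro conjI ballI allI impI)
  show "colour_pattern ({0..<k} \<times> U) (Suc r) (blowup_pattern k U r H)"
    using H colour_pattern_blowup unfolding forcing_pattern_def by blast
next
  fix i assume "i \<in> {1..Suc r}"
  then show "K_free ({0..<k} \<times> U) (blowup_pattern k U r H i) (k + 1)"
    using H K_free_blowup_last K_free_blowup unfolding forcing_pattern_def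
    by (metis atLeastAtMost_iff le_SucE)
qed (use blowup_pattern_forces_mono_clique[OF H \<open>k \<ge> 1\<close>] in blast)

lemma forcing_pattern_exists:
  assumes "k \<ge> 1" "r \<ge> 1"
  shows "\<exists>(n::nat) G. forcing_pattern {0..<n} r G k"
  using \<open>r \<ge> 1\<close>
proof (induction r rule: nat_induct_at_least)
  case base
  show ?case by (rule exI, rule exI, rule forcing_pattern_complete_graph)
next
  case (Suc r)
  then obtain n :: nat and H where "forcing_pattern {0..<n} r H k" by blast
  then have "forcing_pattern ({0..<k} \<times> {0..<n}) (Suc r) (blowup_pattern k {0..<n} r H) k"
    using forcing_pattern_blowup \<open>k \<ge> 1\<close> by blast
  moreover have "finite ({0..<k} \<times> {0..<n})" by simp
  ultimately obtain G where "forcing_pattern {0..<card ({0..<k} \<times> {0..<n})} (Suc r) G k"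
    using forcing_pattern_relabel by blast
  then show ?case by blast
qed

lemma P_forcing_pattern:
  assumes "k \<ge> 1" "r \<ge> 1"
  shows "\<exists>G. forcing_pattern {0..<P r k} r G k"
  unfolding P_eq_Least using forcing_pattern_exists[OF assms] by (rule LeastI_ex)

subsection \<open>Deleting the colour-\<open>r\<close> part\<close>

lemma alpha_k_witness:
  assumes "finite V" "k \<ge> 1"
  obtains S where "S \<subseteq> V" "K_free S E k" "card S = alpha_k V E k"
proof -
  let ?A = "{card S | S. S \<subseteq> V \<and> K_free S E k}"
  have "?A \<subseteq> {0..card V}"
  proof
    fix x assume "x \<in> ?A"
    then obtain S where "x = card S" "S \<subseteq> V" by blast
    then show "x \<in> {0..card V}" using card_mono[OF assms(1)] by simp
  qed
  then have "finite ?A" by (rule finite_subset) simp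
  moreover have "K_free {} E k" using assms(2) by (simp add: K_free_def)
  then have "?A \<noteq> {}" by blast
  ultimately have "Max ?A \<in> ?A" by (rule Max_in)
  then obtain S where "S \<subseteq> V" "K_free S E k" "card S = Max ?A" by auto
  then show ?thesis by (intro that) (simp_all add: alpha_k_def)
qed

lemma erdos_rogers_le_alpha_k:
  assumes "graph_on {0..<n} F" "K_free {0..<n} F (k + 1)"
  shows "erdos_rogers k n \<le> alpha_k {0..<n} F k"
proof -
  let ?B = "{alpha_k {0..<n} F k | F. graph_on {0..<n} F \<and> K_free {0..<n} F (k + 1)}"
  have "?B \<subseteq> (\<lambda>F. alpha_k {0..<n} F k) ` Pow (Pow {0..<n})"
  proof
    fix x assume "x \<in> ?B"
    then obtain F' where "x = alpha_k {0..<n} F' k" "graph_on {0..<n} F'" by blast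
    moreover from this(2) have "F' \<in> Pow (Pow {0..<n})" by (auto simp: graph_on_def)
    ultimately show "x \<in> (\<lambda>F. alpha_k {0..<n} F k) ` Pow (Pow {0..<n})" by blast
  qed
  then have "finite ?B" by (rule finite_subset) simp
  moreover have "alpha_k {0..<n} F k \<in> ?B" using assms by blast
  ultimately show ?thesis unfolding erdos_rogers_def by (rule Min_le)
qed

lemma is_clique_restrict: "T \<subseteq> W \<Longrightarrow> is_clique {e \<in> E. e \<subseteq> W} T \<longleftrightarrow> is_clique E T"
  unfolding is_clique_def by blast

lemma colour_pattern_restrict:
  assumes G: "colour_pattern V r G" and "1 \<le> r'" "r' \<le> r"
  shows "colour_pattern W r' (\<lambda>i. {e \<in> G i. e \<subseteq> W})"
  unfolding colour_pattern_def
proof (intro conjI ballI impI)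
  show "1 \<le> r'" by fact
next
  fix i assume "i \<in> {1..r'}"
  then have "graph_on V (G i)" using G \<open>r' \<le> r\<close> by (simp add: colour_pattern_def)
  then show "graph_on W {e \<in> G i. e \<subseteq> W}" unfolding graph_on_def by blast
next
  fix i j assume "i \<in> {1..r'}" "j \<in> {1..r'}" "i \<noteq> j"
  then have "G i \<inter> G j = {}" using G \<open>r' \<le> r\<close> by (simp add: colour_pattern_def)
  then show "{e \<in> G i. e \<subseteq> W} \<inter> {e \<in> G j. e \<subseteq> W} = {}" by blast
qed

lemma K_free_restrict:
  assumes E: "K_free V E m" and "W \<subseteq> V"
  shows "K_free W {e \<in> E. e \<subseteq> W} m"
  unfolding K_free_def
proof
  assume "\<exists>T. T \<subseteq> W \<and> card T = m \<and> is_clique {e \<in> E. e \<subseteq> W} T"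
  then obtain T where T: "T \<subseteq> W" "card T = m" "is_clique {e \<in> E. e \<subseteq> W} T" by blast
  then have "is_clique E T" using is_clique_restrict[OF T(1)] by simp
  then show False using E T(1,2) \<open>W \<subseteq> V\<close> unfolding K_free_def by blast
qed

lemma forcing_pattern_remove_K_free_set:
  assumes G: "forcing_pattern V r G k" and "r \<ge> 2"
    and S: "S \<subseteq> V" "K_free S (G r) k"
  shows "forcing_pattern (V - S) (r - 1) (\<lambda>i. {e \<in> G i. e \<subseteq> V - S}) k"
  unfolding forcing_pattern_def
proof (intro conjI ballI allI impI)
  have "colour_pattern V r G" using G by (simp add: forcing_pattern_def)
  then show "colour_pattern (V - S) (r - 1) (\<lambda>i. {e \<in> G i. e \<subseteq> V - S})"
    by (rule colour_pattern_restrict) (use \<open>r \<ge> 2\<close> in auto)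
next
  fix i assume "i \<in> {1..r - 1}"
  then have "i \<in> {1..r}" by auto
  then have "K_free V (G i) (k + 1)" using G unfolding forcing_pattern_def by blast
  then show "K_free (V - S) {e \<in> G i. e \<subseteq> V - S} (k + 1)" by (rule K_free_restrict) blast
next
  fix c' :: "'a \<Rightarrow> nat" assume c': "\<forall>v\<in>V - S. c' v \<in> {1..r - 1}"
  define c where "c v = (if v \<in> S then r else c' v)" for v
  have "\<forall>v\<in>V. c v \<in> {1..r}"
  proof
    fix v assume "v \<in> V"
    show "c v \<in> {1..r}"
    proof (cases "v \<in> S")
      case False
      then have "c' v \<in> {1..r - 1}" using c' \<open>v \<in> V\<close> by blast
      then show ?thesis using False by (auto simp: c_def)
    qed (use \<open>r \<ge> 2\<close> in \<open>simp add: c_def\<close>)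
  qed
  then obtain T where "strongly_mono_clique V G c k T"
    using G unfolding forcing_pattern_def by blast
  then obtain i where T: "T \<subseteq> V" "card T = k" "\<forall>v\<in>T. c v = i" and clique: "is_clique (G i) T"
    unfolding strongly_mono_clique_def by auto
  have colour_off_S: "c' v = i" if "v \<in> T" "v \<notin> S" for v
    using bspec[OF T(3) that(1)] that(2) by (simp add: c_def)
  have "i \<noteq> r"
  proof
    assume "i = r"
    have "T \<subseteq> S"
    proof
      fix v assume "v \<in> T"
      show "v \<in> S"
      proof (rule ccontr)
        assume "v \<notin> S"
        then have "c' v \<in> {1..r - 1}" using c' T(1) \<open>v \<in> T\<close> by blast
        then show False using colour_off_S[OF \<open>v \<in> T\<close> \<open>v \<notin> S\<close>] \<open>i = r\<close> by (simp; linarith)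
      qed
    qed
    then show False using S(2) T(2) clique \<open>i = r\<close> unfolding K_free_def by blast
  qed
  then have "T \<subseteq> V - S" using T by (auto simp: c_def)
  moreover have "\<forall>v\<in>T. c' v = i" using calculation colour_off_S by blast
  ultimately have "strongly_mono_clique (V - S) (\<lambda>i. {e \<in> G i. e \<subseteq> V - S}) c' k T"
    using T(2) clique is_clique_restrict unfolding strongly_mono_clique_def by blast
  then show "\<exists>T. strongly_mono_clique (V - S) (\<lambda>i. {e \<in> G i. e \<subseteq> V - S}) c' k T" ..
qed

theorem proposition3p2:
  fixes r k :: nat
  assumes "r \<ge> 2" and "k \<ge> 2"
  shows "P r k \<ge> P (r - 1) k + erdos_rogers k (P r k)"
proof -
  let ?V = "{0..<P r k}"
  have "k \<ge> 1" "r \<ge> 1" using assms by auto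
  then obtain G where G: "forcing_pattern ?V r G k" using P_forcing_pattern by blast
  obtain S where S: "S \<subseteq> ?V" "K_free S (G r) k" "card S = alpha_k ?V (G r) k"
    using alpha_k_witness[OF finite_atLeastLessThan \<open>k \<ge> 1\<close>] by blast
  have "graph_on ?V (G r)" "K_free ?V (G r) (k + 1)"
    using G \<open>r \<ge> 1\<close> unfolding forcing_pattern_def colour_pattern_def by auto
  then have "erdos_rogers k (P r k) \<le> card S" using erdos_rogers_le_alpha_k S(3) by simp
  moreover have "P (r - 1) k \<le> card (?V - S)"
    using forcing_pattern_remove_K_free_set[OF G \<open>r \<ge> 2\<close> S(1,2)] by (simp add: P_le_card)
  moreover have "card (?V - S) = P r k - card S" "card S \<le> P r k"
    using S(1) card_mono[OF _ S(1)] by (simp_all add: card_Diff_subset finite_subset)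
  ultimately show ?thesis by linarith
qed

end
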